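(* For all $n\in\mathbb N$ the following holds in the $q$-shuffle algebra $\mathbb V$: $$C_n=(-1)^n\sum_{i=0}^n q^{2i-n}D_i\star D_{n-i}.$$
   Context: Let $\mathbb F$ be a field and let $q\in\mathbb F$ be nonzero and not a root of unity. Let $[m]_q=(q^m-q^{-m})/(q-q^{-1})$. Let $\mathbb V$ be the free associative $\mathbb F$-algebra on noncommuting $x,y$, with basis the words (including $1$). Juxtaposition denotes concatenation. Set $\langle x,x\rangle=\langle y,y\rangle=2$ and $\langle x,y\rangle=\langle y,x\rangle=-2$. The $q$-shuffle product $\star$ is the bilinear product determined as follows: - $1\star v=v\star 1=v$; - for nontrivial words $u=u_1\cdots u_r$ and $v=v_1\cdots v_s$, $$u\star v=u_1((u_2\cdots u_r)\star v)+v_1(u\star(v_2\cdots v_s))q^{\langle u_1,v_1\rangle+\cdots+\langle u_r,v_1\rangle}.$$ This makes $\mathbb V$ an associative algebra, the $q$-shuffle algebra. For $k\in\mathbb N$, let $\tilde G_k=xyxy\cdots xy$ be the word of length $2k$, with $\tilde G_0=1$. Define $D_0=1$ and, for $n\ge1$, define $D_n$ recursively by $\sum_{i=0}^n D_i\star\tilde G_{n-i}=0$. Let $\overline x=1$ and $\overline y=-1$. A word $v_1\cdots v_m$ is Catalan if $\overline v_1+\cdots+\overline v_i\ge0$ for $1\le i\le m-1$ and $\overline v_1+\cdots+\overline v_m=0$. For $n\in\mathbb N$, $$C_n=\sum v_1\cdots v_{2n}\,[1]_q[1+\overline v_1]_q\cdots[1+\overline v_1+\cdots+\overline v_{2n}]_q,$$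 where the sum is over Catalan words of length $2n$ (so $C_0=1$). *)

theory Defs
  imports Main
begin

text \<open>An element of the q-shuffle
algebra is represented by its coefficient function on words
(type letter list => 'a); all elements used below have finite support.\<close>

datatype letter = X | Y

type_synonym 'a vec = "letter list \<Rightarrow> 'a"

definition pair :: "letter \<Rightarrow> letter \<Rightarrow> int" where
  "pair a b = (if a = b then 2 else -2)"

definition word :: "letter list \<Rightarrow> 'a::field vec" where
  "word v = (\<lambda>w. if w = v then 1 else 0)"

definition prefix_vec :: "letter \<Rightarrow> 'a::field vec \<Rightarrow> 'a vec" where
  "prefix_vec a f = (\<lambda>w. case w of [] \<Rightarrow> 0 | c # w' \<Rightarrow> (if c = a then f w' else 0))"

definition add_vec :: "'a::field vec \<Rightarrow> 'a vec \<Rightarrow> 'a vec" where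
  "add_vec f g = (\<lambda>w. f w + g w)"

definition smult_vec :: "'a::field \<Rightarrow> 'a vec \<Rightarrow> 'a vec" where
  "smult_vec c f = (\<lambda>w. c * f w)"

definition zero_vec :: "'a::field vec" where
  "zero_vec = (\<lambda>w. 0)"

definition sum_vec :: "(nat \<Rightarrow> 'a::field vec) \<Rightarrow> nat set \<Rightarrow> 'a vec" where
  "sum_vec F I = (\<lambda>w. \<Sum>i\<in>I. F i w)"

fun qshuffle_word :: "'a::field \<Rightarrow> letter list \<Rightarrow> letter list \<Rightarrow> 'a vec" where
  "qshuffle_word q [] v = word v"
| "qshuffle_word q (a # u) [] = word (a # u)"
| "qshuffle_word q (a # u) (b # v) =
     add_vec (prefix_vec a (qshuffle_word q u (b # v)))
             (smult_vec (q powi (sum_list (map (\<lambda>c. pair c b) (a # u))))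
                        (prefix_vec b (qshuffle_word q (a # u) v)))"

text \<open>Bilinear extension of the q-shuffle product.  The coefficient of a word w
in u \<star> v is zero unless length u + length v = length w, so the sum is finite.\<close>
definition qshuffle :: "'a::field \<Rightarrow> 'a vec \<Rightarrow> 'a vec \<Rightarrow> 'a vec" where
  "qshuffle q f g = (\<lambda>w. \<Sum>k\<le>length w.
      \<Sum>u\<in>{u. length u = k}. \<Sum>v\<in>{v. length v = length w - k}.
        f u * g v * qshuffle_word q u v w)"

definition Gt :: "nat \<Rightarrow> 'a::field vec" where
  "Gt k = word (concat (replicate k [X, Y]))"

text \<open>D_0 = 1 and sum_{i=0}^n D_i \<star> G~_{n-i} = 0 for n >= 1, i.e.
D_n = - sum_{i<n} D_i \<star> G~_{n-i} (as G~_0 = 1 is the unit).\<close>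
function D :: "'a::field \<Rightarrow> nat \<Rightarrow> 'a vec" where
  "D q n = (if n = 0 then word []
            else (\<lambda>w. - (\<Sum>i<n. qshuffle q (D q i) (Gt (n - i)) w)))"
  by auto
termination by (relation "measure (\<lambda>(q, n). n)") auto

definition qint :: "'a::field \<Rightarrow> int \<Rightarrow> 'a" where
  "qint q m = (q powi m - q powi (-m)) / (q - inverse q)"

definition bar :: "letter \<Rightarrow> int" where
  "bar a = (if a = X then 1 else -1)"

definition psum :: "letter list \<Rightarrow> nat \<Rightarrow> int" where
  "psum w i = sum_list (map bar (take i w))"

definition catalan :: "letter list \<Rightarrow> bool" where
  "catalan w \<longleftrightarrow> (\<forall>i. 1 \<le> i \<and> i \<le> length w - 1 \<longrightarrow> psum w i \<ge> 0) \<and> psum w (length w) = 0"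

definition C :: "'a::field \<Rightarrow> nat \<Rightarrow> 'a vec" where
  "C q n = (\<lambda>w. if catalan w \<and> length w = 2 * n
               then (\<Prod>i\<le>2 * n. qint q (1 + psum w i)) else 0)"

end

theory Submission
  imports Defs
begin

(* Read words as lattice paths (x up, y down).  A path series assigns to a path the product of a
   weight for every step, depending on the step and the height it starts from.  Stripping the
   first letter of a q-shuffle obeys a Leibniz rule, in which the second term twists the left
   factor by q^<u,c>; on a path series started at height h the twist is just the scalar
   q^(-+2h).  By induction on words this yields two identities between path series:
   (1) the Dyck series with up-weights -[h+1]_q and down-weights [h]_q, times the series of all
       (xy)^k, vanishes on nonempty words, so its homogeneous parts are the D_n;
   (2) the Dyck series with up-weights q[h+1]_q times the one with up-weights q^-1 [h+1]_q is the
       Catalan series, whose homogeneous parts are the C_n.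
   Rescaling the up-weights multiplies the part of length 2i by a power of the scalar, so the
   part of length 2n of (2) is exactly the right-hand side. *)

section \<open>The first-letter recursion of the q-shuffle product\<close>

lemma words_length_Suc:
  "{w. length w = Suc k} = Cons X ` {w. length w = k} \<union> Cons Y ` {w. length w = k}"
proof -
  have "w \<in> Cons X ` {w. length w = k} \<union> Cons Y ` {w. length w = k}" if "length w = Suc k" for w
    using that by (cases w) (auto intro: letter.exhaust)
  then show ?thesis by auto
qed

lemma finite_words_length: "finite {w :: letter list. length w = k}"
  by (induction k) (simp_all add: words_length_Suc)

lemma sum_words_length_Suc:
  "(\<Sum>w | length w = Suc k. h w) = (\<Sum>w | length w = k. h (X # w) + h (Y # w))"
proof -
  have "(\<Sum>w | length w = Suc k. h w) =
      (\<Sum>w\<in>Cons X ` {w. length w = k}. h w) + (\<Sum>w\<in>Cons Y ` {w. length w = k}. h w)"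
    unfolding words_length_Suc by (rule sum.union_disjoint) (auto simp: finite_words_length)
  then show ?thesis by (simp add: sum.reindex sum.distrib)
qed

definition pair_list :: "letter list \<Rightarrow> letter \<Rightarrow> int" where
  "pair_list u c = (\<Sum>d\<leftarrow>u. pair d c)"

definition unprefix_vec :: "letter \<Rightarrow> 'a::field vec \<Rightarrow> 'a vec" where
  "unprefix_vec c f = (\<lambda>w. f (c # w))"

definition twist_vec :: "'a::field \<Rightarrow> letter \<Rightarrow> 'a vec \<Rightarrow> 'a vec" where
  "twist_vec q c f = (\<lambda>u. q powi pair_list u c * f u)"

lemma qshuffle_word_Nil_right: "qshuffle_word q u [] = word u"
  by (cases u) auto

lemma qshuffle_word_Cons_eq:
  "qshuffle_word q u v (c # w) =
     (case u of [] \<Rightarrow> 0 | d # u' \<Rightarrow> if d = c then qshuffle_word q u' v w else 0) +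
     (case v of [] \<Rightarrow> 0 | d # v' \<Rightarrow>
        if d = c then q powi pair_list u c * qshuffle_word q u v' w else 0)"
  by (cases u; cases v)
    (auto simp: word_def qshuffle_word_Nil_right add_vec_def smult_vec_def prefix_vec_def pair_list_def)

lemma qshuffle_Nil: "qshuffle q f g [] = f [] * g []"
proof -
  have "{u :: letter list. length u = 0} = {[]}" by auto
  then show ?thesis by (simp add: qshuffle_def word_def)
qed

lemma qshuffle_Cons:
  "qshuffle q f g (c # w) =
     qshuffle q (unprefix_vec c f) g w + qshuffle q (twist_vec q c f) (unprefix_vec c g) w"
proof -
  define m where "m = length w"
  define L where "L u v = (case u of [] \<Rightarrow> 0 | d # u' \<Rightarrow>
    if d = c then qshuffle_word q u' v w else 0)" for u v
  define R where "R u v = (case v of [] \<Rightarrow> 0 | d # v' \<Rightarrow>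
    if d = c then q powi pair_list u c * qshuffle_word q u v' w else 0)" for u v
  have "qshuffle q f g (c # w) =
      (\<Sum>k\<le>Suc m. \<Sum>u | length u = k. \<Sum>v | length v = Suc m - k. f u * g v * L u v) +
      (\<Sum>k\<le>Suc m. \<Sum>u | length u = k. \<Sum>v | length v = Suc m - k. f u * g v * R u v)"
    by (simp add: qshuffle_def qshuffle_word_Cons_eq L_def R_def m_def distrib_left sum.distrib)
  also have "(\<Sum>k\<le>Suc m. \<Sum>u | length u = k. \<Sum>v | length v = Suc m - k. f u * g v * L u v)
      = (\<Sum>k\<le>m. \<Sum>u | length u = Suc k. \<Sum>v | length v = m - k. f u * g v * L u v)"
    by (subst sum.atMost_Suc_shift) (simp add: L_def)
  also have "\<dots> = qshuffle q (unprefix_vec c f) g w"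
    unfolding sum_words_length_Suc qshuffle_def unprefix_vec_def m_def
    by (cases c) (simp_all add: L_def sum.distrib)
  also have "(\<Sum>k\<le>Suc m. \<Sum>u | length u = k. \<Sum>v | length v = Suc m - k. f u * g v * R u v)
      = (\<Sum>k\<le>m. \<Sum>u | length u = k. \<Sum>v | length v = Suc (m - k). f u * g v * R u v)"
    by (simp add: R_def Suc_diff_le)
  also have "\<dots> = qshuffle q (twist_vec q c f) (unprefix_vec c g) w"
    unfolding sum_words_length_Suc qshuffle_def unprefix_vec_def twist_vec_def m_def
    by (cases c) (simp_all add: R_def sum.distrib ac_simps)
  finally show ?thesis .
qed

lemma qshuffle_scale_left: "qshuffle q (\<lambda>u. a * f u) g w = a * qshuffle q f g w"
  by (simp add: qshuffle_def sum_distrib_left ac_simps)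

lemma qshuffle_scale_right: "qshuffle q f (\<lambda>v. a * g v) w = a * qshuffle q f g w"
  by (simp add: qshuffle_def sum_distrib_left ac_simps)

lemma qshuffle_zero_right: "qshuffle q f (\<lambda>v. 0) w = 0"
  by (simp add: qshuffle_def)

lemma qshuffle_eq_sum_if_products_eq:
  assumes "finite I"
    and "\<And>u v. length u + length v = length w \<Longrightarrow> f u * g v = (\<Sum>i\<in>I. F i u * G i v)"
  shows "qshuffle q f g w = (\<Sum>i\<in>I. qshuffle q (F i) (G i) w)"
proof -
  have "qshuffle q f g w = (\<Sum>k\<le>length w. \<Sum>u | length u = k. \<Sum>v | length v = length w - k.
          \<Sum>i\<in>I. F i u * G i v * qshuffle_word q u v w)"
    unfolding qshuffle_def by (intro sum.cong refl) (simp add: assms(2) sum_distrib_right)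
  also have "\<dots> = (\<Sum>i\<in>I. qshuffle q (F i) (G i) w)"
    unfolding qshuffle_def by (simp add: sum.swap[of _ I])
  finally show ?thesis .
qed

lemma qshuffle_unit_right: "qshuffle q f (word []) w = f w"
proof (induction w arbitrary: f)
  case Nil
  then show ?case by (simp add: qshuffle_Nil word_def)
next
  case (Cons c w)
  have unit_vanishes: "unprefix_vec c (word []) = (\<lambda>v. 0)" by (simp add: unprefix_vec_def word_def)
  show ?case
    unfolding qshuffle_Cons Cons.IH unit_vanishes qshuffle_zero_right by (simp add: unprefix_vec_def)
qed

definition degree_part :: "nat \<Rightarrow> 'a::field vec \<Rightarrow> 'a vec" where
  "degree_part k f = (\<lambda>w. if length w = k then f w else 0)"

lemma qshuffle_degree_parts_eq_0:
  assumes "length w \<noteq> i + j"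
  shows "qshuffle q (degree_part i f) (degree_part j g) w = 0"
proof -
  have "qshuffle q (degree_part i f) (degree_part j g) w = (\<Sum>k\<in>{}. qshuffle q f g w)"
    by (rule qshuffle_eq_sum_if_products_eq) (use assms in \<open>auto simp: degree_part_def\<close>)
  then show ?thesis by simp
qed

lemma qshuffle_even_degree_parts:
  assumes f: "\<And>u. odd (length u) \<Longrightarrow> f u = 0"
  shows "(\<Sum>i\<le>n. qshuffle q (degree_part (2 * i) f) (degree_part (2 * (n - i)) g) w)
    = degree_part (2 * n) (qshuffle q f g) w"
proof (cases "length w = 2 * n")
  case True
  have "f u * g v = (\<Sum>i\<le>n. degree_part (2 * i) f u * degree_part (2 * (n - i)) g v)"
    if uv: "length u + length v = length w" for u v
  proof (cases "even (length u)")
    case True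
    then have "(\<Sum>i\<le>n. degree_part (2 * i) f u * degree_part (2 * (n - i)) g v)
        = (\<Sum>i\<le>n. if i = length u div 2 then f u * g v else 0)"
      using uv \<open>length w = 2 * n\<close> by (intro sum.cong) (auto simp: degree_part_def)
    also have "\<dots> = f u * g v"
      using uv \<open>length w = 2 * n\<close> by (simp; presburger)
    finally show ?thesis ..
  qed (auto simp: f degree_part_def intro!: sum.neutral)
  then have "qshuffle q f g w = (\<Sum>i\<le>n. qshuffle q (degree_part (2 * i) f) (degree_part (2 * (n - i)) g) w)"
    by (intro qshuffle_eq_sum_if_products_eq) auto
  with True show ?thesis by (simp add: degree_part_def)
next
  case False
  then have "qshuffle q (degree_part (2 * i) f) (degree_part (2 * (n - i)) g) w = 0" if "i \<le> n" for i
    using that by (intro qshuffle_degree_parts_eq_0) simp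
  then have "(\<Sum>i\<le>n. qshuffle q (degree_part (2 * i) f) (degree_part (2 * (n - i)) g) w) = 0"
    by simp
  with False show ?thesis by (simp only: degree_part_def) simp
qed

lemma qint_0 [simp]: "qint q 0 = 0"
  by (simp add: qint_def)

lemma qint_1:
  assumes "(q::'a::field) \<noteq> 0" and "q ^ 2 \<noteq> 1"
  shows "qint q 1 = 1"
proof -
  have "q - inverse q \<noteq> 0"
  proof
    assume "q - inverse q = 0"
    then have "q * q = q * inverse q" by simp
    with assms show False by (simp add: power2_eq_square)
  qed
  then show ?thesis by (simp add: qint_def)
qed

lemma qint_of_nat: "q \<noteq> 0 \<Longrightarrow> qint q (int m) = (q ^ m - inverse (q ^ m)) / (q - inverse q)"
  by (simp add: qint_def power_int_minus)

lemma qint_add: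
  assumes "(q::'a::field) \<noteq> 0"
  shows "q ^ m * qint q (int (m + n)) = q ^ (m + n) * qint q (int m) + qint q (int n)"
proof -
  have "A * (A * B - inverse A * inverse B) = A * B * (A - inverse A) + (B - inverse B)"
    if "A \<noteq> 0" for A B :: 'a
    using that by (simp add: field_simps)
  then have "q ^ m * (q ^ (m + n) - inverse (q ^ (m + n)))
      = q ^ (m + n) * (q ^ m - inverse (q ^ m)) + (q ^ n - inverse (q ^ n))"
    using assms by (simp add: power_add)
  then show ?thesis
    unfolding qint_of_nat[OF assms] times_divide_eq_right add_divide_distrib[symmetric] by simp
qed

section \<open>Weighted lattice paths\<close>

(* A down-step from height 0 stays at height 0 (truncated subtraction); the hypothesis
   down 0 = 0 used below kills such paths. *)
fun path_weight :: "(nat \<Rightarrow> 'a::field) \<Rightarrow> (nat \<Rightarrow> 'a) \<Rightarrow> nat \<Rightarrow> 'a vec" where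
  "path_weight up down h [] = (if h = 0 then 1 else 0)"
| "path_weight up down h (X # w) = up h * path_weight up down (Suc h) w"
| "path_weight up down h (Y # w) = down h * path_weight up down (h - 1) w"

lemma count_Y_eq_if_path_weight_neq_0:
  assumes "down 0 = 0" and "path_weight up down h w \<noteq> 0"
  shows "count_list w Y = count_list w X + h"
  using assms(2)
proof (induction w arbitrary: h)
  case (Cons c w)
  then show ?case
    by (cases c; cases h) (auto simp: assms(1))
qed (simp split: if_splits)

lemma length_eq_count_X_plus_count_Y: "length w = count_list w X + count_list w Y"
proof (induction w)
  case (Cons c w)
  then show ?case by (cases c) auto
qed simp

lemma path_weight_odd_length_eq_0:
  assumes "down 0 = 0" and "odd (length w)"
  shows "path_weight up down 0 w = 0"
  using count_Y_eq_if_path_weight_neq_0[where down = down, OF assms(1)] assms(2)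
    length_eq_count_X_plus_count_Y[of w]
  by fastforce

lemma path_weight_scale_up:
  "path_weight (\<lambda>h. s * up h) down h w = s ^ count_list w X * path_weight up down h w"
proof (induction w arbitrary: h)
  case (Cons c w)
  then show ?case by (cases c) (simp_all add: ac_simps)
qed simp

lemma unprefix_path_weight [simp]:
  "unprefix_vec X (path_weight up down h) = (\<lambda>w. up h * path_weight up down (Suc h) w)"
  "unprefix_vec Y (path_weight up down h) = (\<lambda>w. down h * path_weight up down (h - 1) w)"
  by (simp_all add: unprefix_vec_def)

lemma pair_list_eq: "pair_list u c = 2 * bar c * (int (count_list u X) - int (count_list u Y))"
proof (induction u)
  case (Cons d u)
  then show ?case by (cases c; cases d) (auto simp: pair_list_def pair_def bar_def)
qed (simp add: pair_list_def)

lemma twist_path_weight: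
  assumes "down 0 = 0"
  shows "twist_vec q X (path_weight up down h) = (\<lambda>u. inverse q ^ (2 * h) * path_weight up down h u)"
    and "twist_vec q Y (path_weight up down h) = (\<lambda>u. q ^ (2 * h) * path_weight up down h u)"
proof -
  have "pair_list u c = - 2 * bar c * int h" if "path_weight up down h u \<noteq> 0" for u c
    using count_Y_eq_if_path_weight_neq_0[where down = down, OF assms that] by (simp add: pair_list_eq)
  then have "twist_vec q c (path_weight up down h) u = q powi (- 2 * bar c * int h) * path_weight up down h u"
    for c u by (cases "path_weight up down h u = 0") (auto simp: twist_vec_def)
  moreover have "q powi (- 2 * bar X * int h) = inverse q ^ (2 * h)" "q powi (- 2 * bar Y * int h) = q ^ (2 * h)"
    unfolding power_inverse[symmetric] power_int_of_nat[symmetric] power_int_minus[symmetric]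
    by (simp_all add: bar_def power_int_minus power_int_inverse)
  ultimately show "twist_vec q X (path_weight up down h) = (\<lambda>u. inverse q ^ (2 * h) * path_weight up down h u)"
    and "twist_vec q Y (path_weight up down h) = (\<lambda>u. q ^ (2 * h) * path_weight up down h u)"
    by auto
qed

section \<open>The closed form of D_n\<close>

abbreviation dyck_weight :: "'a::field \<Rightarrow> 'a \<Rightarrow> nat \<Rightarrow> 'a vec" where
  "dyck_weight q s \<equiv> path_weight (\<lambda>h. s * qint q (int h + 1)) (\<lambda>h. qint q (int h))"

fun xy_powers :: "'a::field vec" and y_xy_powers :: "'a::field vec" where
  "xy_powers [] = 1"
| "xy_powers (X # w) = y_xy_powers w"
| "xy_powers (Y # w) = 0"
| "y_xy_powers [] = 0"
| "y_xy_powers (X # w) = 0"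
| "y_xy_powers (Y # w) = xy_powers w"

lemma unprefix_xy_powers [simp]:
  "unprefix_vec X xy_powers = y_xy_powers" "unprefix_vec Y xy_powers = (\<lambda>w. 0)"
  "unprefix_vec X y_xy_powers = (\<lambda>w. 0)" "unprefix_vec Y y_xy_powers = xy_powers"
  by (simp_all add: unprefix_vec_def fun_eq_iff)

lemma xy_powers_xy_power: "xy_powers (concat (replicate k [X, Y])) = 1"
  by (induction k) simp_all

lemma xy_powers_neq_0_imp_xy_power:
  "((xy_powers w :: 'a::field) \<noteq> 0 \<longrightarrow> (\<exists>k. w = concat (replicate k [X, Y]))) \<and>
   ((y_xy_powers w :: 'a) \<noteq> 0 \<longrightarrow> (\<exists>k. w = Y # concat (replicate k [X, Y])))"
proof (induction w)
  case Nil
  have "[] = concat (replicate 0 [X, Y])" by simp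
  then show ?case by auto
next
  case (Cons c w)
  show ?case
  proof (cases c)
    case X
    have "\<exists>k. X # w = concat (replicate k [X, Y])" if yxy: "(y_xy_powers w :: 'a) \<noteq> 0"
    proof -
      obtain k where "w = Y # concat (replicate k [X, Y])" using Cons.IH yxy by blast
      then have "X # w = concat (replicate (Suc k) [X, Y])" by simp
      then show ?thesis ..
    qed
    with X show ?thesis by auto
  qed (use Cons.IH in auto)
qed

lemma length_xy_power: "length (concat (replicate k [X, Y])) = 2 * k"
  by (induction k) auto

lemma Gt_eq_degree_part: "Gt k = degree_part (2 * k) xy_powers"
proof
  fix w :: "letter list"
  show "Gt k w = degree_part (2 * k) xy_powers w"
    using xy_powers_neq_0_imp_xy_power[of w] length_xy_power
    by (auto simp: Gt_def word_def degree_part_def xy_powers_xy_power)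
qed

lemma xy_powers_odd_length_eq_0: "odd (length w) \<Longrightarrow> xy_powers w = 0"
  using xy_powers_neq_0_imp_xy_power[of w] length_xy_power by auto

lemma dyck_weight_shuffle_xy_powers:
  assumes q: "(q::'a::field) \<noteq> 0" and q1: "qint q 1 = 1"
  defines "U \<equiv> path_weight (\<lambda>h. - q * qint q (int h)) (\<lambda>h. qint q (int h))"
  shows "qshuffle q (dyck_weight q (-1) h) xy_powers w = U h w \<and>
         qshuffle q (dyck_weight q (-1) h) y_xy_powers w = q ^ h * U (Suc h) w"
proof (induction w arbitrary: h)
  case Nil
  then show ?case by (simp add: qshuffle_Nil U_def)
next
  case (Cons c w)
  have IH: "qshuffle q (dyck_weight q (-1) k) xy_powers w = U k w"
    "qshuffle q (dyck_weight q (-1) k) y_xy_powers w = q ^ k * U (Suc k) w" for k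
    using Cons.IH by blast+
  note shuffle_rules = qshuffle_Cons unprefix_path_weight unprefix_xy_powers
    twist_path_weight[where down = "\<lambda>h. qint q (int h)", simplified]
    qshuffle_scale_left qshuffle_zero_right IH
  show ?case
  proof (cases c)
    case X
    have "q ^ h * qint q (int (h + 1)) = q ^ (h + 1) * qint q (int h) + 1"
      using qint_add[OF q, of h 1] q1 by simp
    then have e: "qint q (int h + 1) = (q ^ (h + 1) * qint q (int h) + 1) / q ^ h"
      using q by (simp add: eq_divide_eq ac_simps)
    have "qshuffle q (dyck_weight q (-1) h) xy_powers (X # w)
        = (- qint q (int h + 1) + inverse q ^ (2 * h) * q ^ h) * U (Suc h) w"
      by (simp only: shuffle_rules) (simp add: algebra_simps)
    also have "\<dots> = U h (X # w)"
      unfolding e U_def using q by (simp add: mult_2 mult_2_right power_add field_simps)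
    moreover have "qshuffle q (dyck_weight q (-1) h) y_xy_powers (X # w) = q ^ h * U (Suc h) (X # w)"
      by (simp only: shuffle_rules) (simp add: U_def ac_simps)
    ultimately show ?thesis using X by simp
  next
    case Y
    have scalar: "qint q (int h) * q ^ (h - 1) + q ^ (2 * h) = q ^ h * qint q (int h + 1)"
    proof (cases h)
      case (Suc h')
      have "q * qint q (int (1 + Suc h')) = q ^ (1 + Suc h') * qint q 1 + qint q (int (Suc h'))"
        using qint_add[OF q, of 1 "Suc h'"] by simp
      then have e: "qint q (int (Suc h') + 1) = (q ^ Suc (Suc h') + qint q (int (Suc h'))) / q"
        using q q1 by (simp add: eq_divide_eq ac_simps)
      show ?thesis
        unfolding Suc e using q by (simp add: mult_2 mult_2_right power_add field_simps)
    qed (simp add: q1)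
    have "qint q (int h) * U (Suc (h - 1)) w = qint q (int h) * U h w"
      by (cases h) simp_all
    then have "qshuffle q (dyck_weight q (-1) h) y_xy_powers (Y # w)
        = (qint q (int h) * q ^ (h - 1) + q ^ (2 * h)) * U h w"
      by (simp only: shuffle_rules) (auto simp: algebra_simps)
    also have "\<dots> = q ^ h * U (Suc h) (Y # w)"
      using scalar by (simp add: U_def ac_simps)
    finally have "qshuffle q (dyck_weight q (-1) h) y_xy_powers (Y # w) = q ^ h * U (Suc h) (Y # w)" .
    moreover have "qshuffle q (dyck_weight q (-1) h) xy_powers (Y # w) = U h (Y # w)"
      by (simp only: shuffle_rules) (simp add: U_def)
    ultimately show ?thesis using Y by simp
  qed
qed

lemma D_eq_degree_part:
  assumes q: "(q::'a::field) \<noteq> 0" and q1: "qint q 1 = 1"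
  shows "D q n = degree_part (2 * n) (dyck_weight q (-1) 0)"
proof (induction n rule: less_induct)
  case (less n)
  define D' where "D' i = degree_part (2 * i) (dyck_weight q (-1) 0)" for i
  show ?case
  proof (cases "n = 0")
    case True
    then show ?thesis by (auto simp: degree_part_def word_def)
  next
    case False
    show ?thesis
    proof
      fix w
      have "(\<Sum>i\<le>n. qshuffle q (D' i) (Gt (n - i)) w)
          = degree_part (2 * n) (qshuffle q (dyck_weight q (-1) 0) xy_powers) w"
        unfolding Gt_eq_degree_part D'_def
        by (rule qshuffle_even_degree_parts)
          (simp add: path_weight_odd_length_eq_0)
      also have "\<dots> = 0"
        using False dyck_weight_shuffle_xy_powers[OF q q1, of 0 w]
        by (cases w rule: list.exhaust; cases "hd w") (auto simp: degree_part_def)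
      finally have sum_eq_0: "(\<Sum>i\<le>n. qshuffle q (D' i) (Gt (n - i)) w) = 0" .
      have "D q n w = - (\<Sum>i<n. qshuffle q (D q i) (Gt (n - i)) w)"
        using False by simp
      also have "\<dots> = - (\<Sum>i<n. qshuffle q (D' i) (Gt (n - i)) w)"
        using less by (simp add: D'_def)
      also have "\<dots> = qshuffle q (D' n) (Gt 0) w"
        using sum_eq_0 by (simp add: lessThan_Suc_atMost[symmetric] add_eq_0_iff)
      also have "\<dots> = D' n w"
        by (simp add: Gt_def qshuffle_unit_right)
      finally show "D q n w = degree_part (2 * n) (dyck_weight q (-1) 0) w"
        by (simp add: D'_def)
    qed
  qed
qed

section \<open>The Catalan series\<close>

abbreviation catalan_weight :: "'a::field \<Rightarrow> nat \<Rightarrow> 'a vec" where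
  "catalan_weight q \<equiv> path_weight (\<lambda>h. qint q (int h + 2)) (\<lambda>h. qint q (int h))"

lemma dyck_weight_shuffle_dyck_weight:
  assumes q: "(q::'a::field) \<noteq> 0"
  shows "qshuffle q (dyck_weight q q a) (dyck_weight q (inverse q) b) w
    = q ^ (a * b) * catalan_weight q (a + b) w"
proof (induction w arbitrary: a b)
  case Nil
  then show ?case by (simp add: qshuffle_Nil)
next
  case (Cons c w)
  note shuffle_rules = qshuffle_Cons unprefix_path_weight
    twist_path_weight[where down = "\<lambda>h. qint q (int h)", simplified]
    qshuffle_scale_left qshuffle_scale_right Cons.IH
  show ?case
  proof (cases c)
    case X
    have "q ^ Suc a * qint q (int (Suc a + Suc b))
        = q ^ (Suc a + Suc b) * qint q (int (Suc a)) + qint q (int (Suc b))"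
      using qint_add[OF q] .
    then have e: "qint q (int (a + b) + 2)
        = (q ^ (Suc a + Suc b) * qint q (int a + 1) + qint q (int b + 1)) / q ^ Suc a"
      using q by (simp add: eq_divide_eq ac_simps)
    have "qshuffle q (dyck_weight q q a) (dyck_weight q (inverse q) b) (X # w)
        = (q * qint q (int a + 1) * q ^ (Suc a * b)
           + inverse q ^ (2 * a) * inverse q * qint q (int b + 1) * q ^ (a * Suc b))
          * catalan_weight q (Suc (a + b)) w"
      by (simp only: shuffle_rules) (simp add: algebra_simps)
    also have "\<dots> = q ^ (a * b) * (qint q (int (a + b) + 2) * catalan_weight q (Suc (a + b)) w)"
      unfolding e using q by (simp add: mult_2 mult_2_right power_add power_inverse field_simps)
    finally show ?thesis using X by simp
  next
    case Y
    show ?thesis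
    proof (cases "a = 0 \<or> b = 0")
      case True
      then show ?thesis
        using Y by (auto simp: shuffle_rules)
    next
      case False
      then obtain a' b' where ab: "a = Suc a'" "b = Suc b'"
        by (meson not0_implies_Suc)
      have "q ^ b * qint q (int (b + a)) = q ^ (b + a) * qint q (int b) + qint q (int a)"
        using qint_add[OF q] .
      then have e: "qint q (int (a + b)) = (q ^ (b + a) * qint q (int b) + qint q (int a)) / q ^ b"
        using q by (simp add: eq_divide_eq ac_simps)
      have "qshuffle q (dyck_weight q q a) (dyck_weight q (inverse q) b) (Y # w)
          = (qint q (int a) * q ^ (a' * b) + q ^ (2 * a) * qint q (int b) * q ^ (a * b'))
            * catalan_weight q (a' + b) w"
        using ab by (simp only: shuffle_rules) (simp add: algebra_simps)
      also have "\<dots> = q ^ (a * b) * (qint q (int (a + b)) * catalan_weight q (a' + b) w)"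
        unfolding e using q ab by (simp add: mult_2 mult_2_right power_add field_simps)
      finally show ?thesis using Y ab by simp
    qed
  qed
qed

lemma psum_0 [simp]: "psum w 0 = 0"
  by (simp add: psum_def)

lemma psum_Cons_Suc [simp]: "psum (c # w) (Suc i) = bar c + psum w i"
  by (simp add: psum_def)

lemma catalan_weight_eq_prod:
  "catalan_weight q h w =
    (if (\<forall>i<length w. 0 \<le> int h + psum w (Suc i)) \<and> int h + psum w (length w) = 0
     then \<Prod>i<length w. qint q (1 + int h + psum w (Suc i)) else 0)"
proof (induction w arbitrary: h)
  case (Cons c w)
  have nonneg: "(\<forall>i<length (c # w). 0 \<le> int h + psum (c # w) (Suc i)) \<longleftrightarrow>
      0 \<le> int h + bar c \<and> (\<forall>i<length w. 0 \<le> (int h + bar c) + psum w (Suc i))"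
    by (simp only: length_Cons All_less_Suc2 psum_Cons_Suc psum_0) (simp add: algebra_simps)
  have prod: "(\<Prod>i<length (c # w). qint q (1 + int h + psum (c # w) (Suc i))) =
      qint q (1 + (int h + bar c)) * (\<Prod>i<length w. qint q (1 + (int h + bar c) + psum w (Suc i)))"
    by (simp only: length_Cons prod.lessThan_Suc_shift psum_Cons_Suc psum_0) (simp add: algebra_simps)
  have final: "int h + psum (c # w) (length (c # w)) = (int h + bar c) + psum w (length w)"
    by simp
  show ?case
  proof (cases c)
    case X
    then have "int h + bar c = int (Suc h)" by (simp add: bar_def)
    then show ?thesis
      unfolding nonneg prod final using Cons.IH[of "Suc h"] X by (auto simp: algebra_simps)
  next
    case Y
    show ?thesis
    proof (cases h)
      case 0
      then show ?thesis unfolding nonneg using Y by (simp add: bar_def)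
    next
      case (Suc h')
      then have "int h + bar c = int h'" using Y by (simp add: bar_def)
      then show ?thesis
        unfolding nonneg prod final using Cons.IH[of h'] Y Suc by (auto simp: bar_def algebra_simps)
    qed
  qed
qed simp

lemma catalan_iff: "catalan w \<longleftrightarrow> (\<forall>i<length w. 0 \<le> psum w (Suc i)) \<and> psum w (length w) = 0"
proof
  assume "catalan w"
  then have "psum w i \<ge> 0" if "1 \<le> i" "i \<le> length w" for i
    using that by (cases "i = length w") (auto simp: catalan_def)
  with \<open>catalan w\<close> show "(\<forall>i<length w. 0 \<le> psum w (Suc i)) \<and> psum w (length w) = 0"
    by (auto simp: catalan_def)
next
  assume "(\<forall>i<length w. 0 \<le> psum w (Suc i)) \<and> psum w (length w) = 0"
  moreover have "i = Suc (i - 1) \<and> i - 1 < length w" if "1 \<le> i" "i \<le> length w - 1" for i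
    using that by auto
  ultimately show "catalan w"
    unfolding catalan_def by metis
qed

lemma C_eq_degree_part:
  assumes "qint q 1 = 1"
  shows "C q n = degree_part (2 * n) (catalan_weight q 0)"
proof
  fix w
  have "(\<Prod>i\<le>2 * n. qint q (1 + psum w i)) = (\<Prod>i<2 * n. qint q (1 + psum w (Suc i)))"
    using assms by (simp add: prod.atMost_shift)
  then show "C q n w = degree_part (2 * n) (catalan_weight q 0) w"
    unfolding C_def degree_part_def catalan_weight_eq_prod catalan_iff by auto
qed

lemma degree_part_path_weight_scale_up:
  assumes "down 0 = 0"
  shows "degree_part (2 * i) (path_weight (\<lambda>h. s * up h) down 0)
    = (\<lambda>u. s ^ i * degree_part (2 * i) (path_weight up down 0) u)"
proof
  fix u
  have "count_list u X = i" if "length u = 2 * i" "path_weight up down 0 u \<noteq> 0"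
    using count_Y_eq_if_path_weight_neq_0[where down = down, OF assms that(2)]
      length_eq_count_X_plus_count_Y[of u] that(1) by simp
  then show "degree_part (2 * i) (path_weight (\<lambda>h. s * up h) down 0) u
      = s ^ i * degree_part (2 * i) (path_weight up down 0) u"
    by (auto simp: degree_part_def path_weight_scale_up)
qed

lemma degree_part_dyck_weight:
  assumes q: "(q::'a::field) \<noteq> 0" and q1: "qint q 1 = 1"
  shows "degree_part (2 * i) (dyck_weight q s 0) = (\<lambda>u. (- s) ^ i * D q i u)"
proof -
  note scale = degree_part_path_weight_scale_up[where down = "\<lambda>h. qint q (int h)", simplified]
  have "(- s) ^ i * (- 1) ^ i = s ^ i"
    by (simp flip: power_mult_distrib)
  then show ?thesis
    unfolding D_eq_degree_part[OF q q1] scale by (simp add: fun_eq_iff mult.assoc)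
qed

lemma neg_power_mult_neg_inverse_power:
  assumes "(q::'a::field) \<noteq> 0" and "i \<le> n"
  shows "(- q) ^ i * (- inverse q) ^ (n - i) = (-1) ^ n * q powi (2 * int i - int n)"
proof -
  have "(-1) ^ n = (-1) ^ i * ((-1) :: 'a) ^ (n - i)"
    using assms(2) by (simp flip: power_add)
  moreover have "q powi (2 * int i - int n) = q powi (int i - int (n - i))"
    using assms(2) by (simp add: of_nat_diff)
  then have "q powi (2 * int i - int n) = q ^ i * inverse q ^ (n - i)"
    using assms(1) by (simp add: power_int_diff divide_inverse power_inverse)
  ultimately show ?thesis
    by (simp add: power_mult_distrib[symmetric] ac_simps)
qed

theorem proposition11p9:
  fixes q :: "'a::field" and n :: nat
  assumes "q \<noteq> 0"
    and "\<forall>m::nat. m > 0 \<longrightarrow> q ^ m \<noteq> 1"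
  shows "C q n = smult_vec ((-1) ^ n)
           (sum_vec (\<lambda>i. smult_vec (q powi (2 * int i - int n)) (qshuffle q (D q i) (D q (n - i)))) {..n})"
proof
  fix w
  have q1: "qint q 1 = 1"
    by (rule qint_1) (use assms in auto)
  have "smult_vec ((-1) ^ n)
      (sum_vec (\<lambda>i. smult_vec (q powi (2 * int i - int n)) (qshuffle q (D q i) (D q (n - i)))) {..n}) w
    = (\<Sum>i\<le>n. (-1) ^ n * q powi (2 * int i - int n) * qshuffle q (D q i) (D q (n - i)) w)"
    by (simp add: smult_vec_def sum_vec_def sum_distrib_left mult.assoc del: D.simps)
  also have "\<dots> = (\<Sum>i\<le>n. qshuffle q (\<lambda>u. (- q) ^ i * D q i u)
                                   (\<lambda>v. (- inverse q) ^ (n - i) * D q (n - i) v) w)"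
    by (intro sum.cong)
      (simp_all add: neg_power_mult_neg_inverse_power[OF assms(1)] qshuffle_scale_left
         qshuffle_scale_right mult.assoc del: D.simps)
  also have "\<dots> = (\<Sum>i\<le>n. qshuffle q (degree_part (2 * i) (dyck_weight q q 0))
                 (degree_part (2 * (n - i)) (dyck_weight q (inverse q) 0)) w)"
    by (simp only: degree_part_dyck_weight[OF assms(1) q1])
  also have "\<dots> = degree_part (2 * n) (qshuffle q (dyck_weight q q 0) (dyck_weight q (inverse q) 0)) w"
    by (rule qshuffle_even_degree_parts) (simp add: path_weight_odd_length_eq_0)
  also have "\<dots> = C q n w"
    by (simp add: dyck_weight_shuffle_dyck_weight[OF assms(1)] C_eq_degree_part[OF q1] degree_part_def)
  finally show "C q n w = smult_vec ((-1) ^ n)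
      (sum_vec (\<lambda>i. smult_vec (q powi (2 * int i - int n)) (qshuffle q (D q i) (D q (n - i)))) {..n}) w" ..
qed

end
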